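(* Let $\psi\in C^1((0,\infty))$. (1) If $\psi$ is concave, then $C_\psi\ge0$. (2) If $\psi(x)+\psi(1/x)\neq2\psi(1)$ for some $x>0$, then $C_\psi\le0$.
   Context: For $x,y>0$, $\widetilde{\psi}(x,y):=[\psi'(x)+\psi'(y)](1-xy)+x[\psi(y)-\psi(1/x)]+y[\psi(x)-\psi(1/y)]$, and $C_\psi:=\inf\frac{\widetilde{\psi}(x,y)}{(\psi(x)+\psi(y)-2\psi(1))^2}\in[-\infty,\infty]$, the infimum taken over all $x,y>0$ with $\psi(x)+\psi(y)\neq2\psi(1)$. *)

theory Defs
  imports "HOL-Analysis.Analysis"
begin

definition C1_pos :: "(real \<Rightarrow> real) \<Rightarrow> bool" where
  "C1_pos \<psi> \<longleftrightarrow> (\<forall>x>0. \<psi> differentiable (at x)) \<and> continuous_on {0<..} (deriv \<psi>)"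

definition psi_tilde :: "(real \<Rightarrow> real) \<Rightarrow> real \<Rightarrow> real \<Rightarrow> real" where
  "psi_tilde \<psi> x y =
     (deriv \<psi> x + deriv \<psi> y) * (1 - x * y) + x * (\<psi> y - \<psi> (1 / x)) + y * (\<psi> x - \<psi> (1 / y))"

text \<open>C_psi as an extended real (infimum over the admissible set; Inf of empty set is top).\<close>
definition C_psi :: "(real \<Rightarrow> real) \<Rightarrow> ereal" where
  "C_psi \<psi> = (INF p \<in> {(x, y). x > 0 \<and> y > 0 \<and> \<psi> x + \<psi> y \<noteq> 2 * \<psi> 1}.
      ereal (psi_tilde \<psi> (fst p) (snd p) / (\<psi> (fst p) + \<psi> (snd p) - 2 * \<psi> 1)\<^sup>2))"

end

theory Submission
  imports Defs
begin

text \<open>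
  For concave \<open>\<psi>\<close> the tangent inequalities at \<open>y\<close> (evaluated at \<open>1/x\<close>) and at \<open>x\<close>
  (evaluated at \<open>1/y\<close>), multiplied by \<open>x\<close> and \<open>y\<close>, add up to \<open>psi_tilde \<psi> x y \<ge> 0\<close>.
  Conversely \<open>psi_tilde \<psi> x (1/x) = 0\<close> identically, so any admissible pair \<open>(x, 1/x)\<close>
  gives the value \<open>0\<close> in the infimum.
\<close>

lemma concave_on_le_tangent:
  fixes f :: "real \<Rightarrow> real"
  assumes "concave_on S f" "open S" "a \<in> S" "b \<in> S" "f differentiable (at a)"
  shows "f b - f a \<le> deriv f a * (b - a)"
proof -
  have convex: "convex_on S (\<lambda>x. - f x)"
    using assms(1) by (simp add: concave_on_def)
  have "(f has_field_derivative deriv f a) (at a)"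
    using assms(5) by (rule DERIV_deriv_iff_real_differentiable[THEN iffD2])
  then have "((\<lambda>x. - f x) has_field_derivative - deriv f a) (at a within S)"
    by (rule has_field_derivative_at_within[OF DERIV_minus])
  from convex_on_imp_above_tangent[OF convex _ _ _ this, of b]
  have "- f b - - f a \<ge> - deriv f a * (b - a)"
    using assms(2-4) convex_connected[OF convex_on_imp_convex[OF convex]]
    by (simp add: interior_open)
  then show ?thesis by simp
qed

lemma psi_tilde_nonneg_if_concave:
  fixes \<psi> :: "real \<Rightarrow> real"
  assumes "concave_on {0<..} \<psi>" "\<forall>t>0. \<psi> differentiable (at t)" "x > 0" "y > 0"
  shows "psi_tilde \<psi> x y \<ge> 0"
proof -
  have "\<psi> (1/x) - \<psi> y \<le> deriv \<psi> y * (1/x - y)"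
    using assms by (intro concave_on_le_tangent) auto
  from mult_left_mono[OF this, of x]
  have tangent_y: "x * (\<psi> (1/x) - \<psi> y) \<le> deriv \<psi> y * (1 - x * y)"
    using assms(3) by (simp add: algebra_simps)
  have "\<psi> (1/y) - \<psi> x \<le> deriv \<psi> x * (1/y - x)"
    using assms by (intro concave_on_le_tangent) auto
  from mult_left_mono[OF this, of y]
  have tangent_x: "y * (\<psi> (1/y) - \<psi> x) \<le> deriv \<psi> x * (1 - x * y)"
    using assms(4) by (simp add: algebra_simps)
  show ?thesis
    using tangent_x tangent_y unfolding psi_tilde_def by (simp add: algebra_simps)
qed

lemma psi_tilde_reciprocal:
  fixes x :: real
  assumes "x \<noteq> 0"
  shows "psi_tilde \<psi> x (1 / x) = 0"
  using assms unfolding psi_tilde_def by simp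

lemma C_psi_nonneg:
  assumes "\<And>x y. x > 0 \<Longrightarrow> y > 0 \<Longrightarrow> psi_tilde \<psi> x y \<ge> 0"
  shows "C_psi \<psi> \<ge> 0"
  unfolding C_psi_def
proof (rule INF_greatest, clarify)
  fix x y :: real assume "x > 0" "y > 0"
  then show "0 \<le> ereal (psi_tilde \<psi> (fst (x, y)) (snd (x, y))
                 / (\<psi> (fst (x, y)) + \<psi> (snd (x, y)) - 2 * \<psi> 1)\<^sup>2)"
    using assms by simp
qed

lemma C_psi_le:
  assumes "x > 0" "y > 0" "\<psi> x + \<psi> y \<noteq> 2 * \<psi> 1"
  shows "C_psi \<psi> \<le> ereal (psi_tilde \<psi> x y / (\<psi> x + \<psi> y - 2 * \<psi> 1)\<^sup>2)"
  unfolding C_psi_def using assms by (intro INF_lower2[of "(x, y)"]) auto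

theorem mainTheorem15:
  fixes \<psi> :: "real \<Rightarrow> real"
  assumes "C1_pos \<psi>"
  shows "(concave_on {0<..} \<psi> \<longrightarrow> C_psi \<psi> \<ge> 0)
     \<and> ((\<exists>x>0. \<psi> x + \<psi> (1 / x) \<noteq> 2 * \<psi> 1) \<longrightarrow> C_psi \<psi> \<le> 0)"
proof (intro conjI impI)
  assume "concave_on {0<..} \<psi>"
  moreover have "\<forall>t>0. \<psi> differentiable (at t)"
    using assms by (simp add: C1_pos_def)
  ultimately show "C_psi \<psi> \<ge> 0"
    by (intro C_psi_nonneg psi_tilde_nonneg_if_concave)
next
  assume "\<exists>x>0. \<psi> x + \<psi> (1 / x) \<noteq> 2 * \<psi> 1"
  then obtain x where "x > 0" "\<psi> x + \<psi> (1 / x) \<noteq> 2 * \<psi> 1"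
    by blast
  then have "C_psi \<psi> \<le> ereal (psi_tilde \<psi> x (1 / x) / (\<psi> x + \<psi> (1 / x) - 2 * \<psi> 1)\<^sup>2)"
    by (intro C_psi_le) auto
  then show "C_psi \<psi> \<le> 0"
    using \<open>x > 0\<close> by (simp add: psi_tilde_reciprocal zero_ereal_def)
qed

end
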